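(* Let $F_n$, $n=1,2,\dots$, and $F$ be metric preserving functions on $[0,+\infty)^2$. If $F$ is continuous and $F_n\to F$ pointwise, then $F_n\to F$ uniformly on every compact subset of $[0,+\infty)^2$.
   Context: A function $F\colon[0,+\infty)^2\to[0,+\infty)$ is metric preserving if for any metric spaces $(X,d_X),(Y,d_Y)$ the function $((x,y),(x',y'))\mapsto F(d_X(x,x'),d_Y(y,y'))$ is a metric on $X\times Y$. *)

theory Defs
  imports "HOL-Analysis.Analysis"
begin

definition metric_on :: "'a set \<Rightarrow> ('a \<Rightarrow> 'a \<Rightarrow> real) \<Rightarrow> bool" where
  "metric_on M d \<longleftrightarrow>
     (\<forall>x\<in>M. \<forall>y\<in>M. 0 \<le> d x y \<and> d x y = d y x \<and> (d x y = 0 \<longleftrightarrow> x = y)) \<and>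
     (\<forall>x\<in>M. \<forall>y\<in>M. \<forall>z\<in>M. d x z \<le> d x y + d y z)"

text \<open>F (only its values on [0,inf)^2 matter) is metric preserving if for all metric
  spaces (X,dX), (Y,dY) the map ((x,y),(x',y')) to F (dX x x') (dY y y') is a metric on X x Y.
  Metric spaces are represented with carriers inside the fixed type real.\<close>
definition metric_preserving :: "(real \<Rightarrow> real \<Rightarrow> real) \<Rightarrow> bool" where
  "metric_preserving F \<longleftrightarrow>
     (\<forall>(X::real set) (Y::real set) dX dY. metric_on X dX \<and> metric_on Y dY \<longrightarrow>
        metric_on (X \<times> Y) (\<lambda>(x, y) (x', y'). F (dX x x') (dY y y')))"

end

theory Submission imports Defs begin

text \<open>Testing a metric preserving function on the line with the metrics \<open>\<bar>x - y\<bar>\<close> and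
  \<open>min \<bar>x - y\<bar> \<delta>\<close> shows two things: \<open>F\<close> satisfies a triangle inequality on \<open>[0,\<infinity>)\<^sup>2\<close>, and
  \<open>F\<close> is bounded by \<open>2 F \<delta> \<delta>\<close> on \<open>[0,\<delta>]\<^sup>2\<close>. Hence every metric preserving \<open>G\<close> oscillates by
  at most \<open>2 G \<delta> \<delta>\<close> over a \<open>\<delta>\<close>-neighbourhood. Given \<open>\<epsilon>\<close>, continuity of \<open>F\<close> at the origin
  yields \<open>\<delta>\<close> with \<open>F \<delta> \<delta> < \<epsilon>\<close>; pointwise convergence at \<open>(\<delta>, \<delta>)\<close> and at the points of a
  finite \<open>\<delta>\<close>-net of the compact set then controls \<open>F\<^sub>n - F\<close> everywhere on it.\<close>

lemma metric_on_triangle: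
  assumes "metric_on M d" "x \<in> M" "y \<in> M" "z \<in> M"
  shows "d x z \<le> d x y + d y z"
  using assms unfolding metric_on_def by blast

lemma metric_on_self:
  assumes "metric_on M d" "x \<in> M"
  shows "d x x = 0"
  using assms unfolding metric_on_def by blast

lemma metric_on_abs_diff: "metric_on UNIV (\<lambda>x y. \<bar>x - y\<bar> :: real)"
  unfolding metric_on_def by auto

lemma metric_on_min_abs_diff: "(\<delta>::real) > 0 \<Longrightarrow> metric_on UNIV (\<lambda>x y. min \<bar>x - y\<bar> \<delta>)"
  unfolding metric_on_def by auto

lemma metric_preserving_metric_on_Times:
  fixes X Y :: "real set"
  assumes "metric_preserving F" "metric_on X dX" "metric_on Y dY"
  shows "metric_on (X \<times> Y) (\<lambda>(x, y) (x', y'). F (dX x x') (dY y y'))"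
  using assms unfolding metric_preserving_def by blast

lemma metric_preserving_zero:
  assumes "metric_preserving F"
  shows "F 0 0 = 0"
  using metric_on_self[OF metric_preserving_metric_on_Times[OF assms metric_on_abs_diff metric_on_abs_diff],
      of "(0, 0)"]
  by simp

lemma metric_preserving_triangle:
  assumes "metric_preserving F" "0 \<le> a" "0 \<le> b" "0 \<le> c" "0 \<le> d"
  shows "F a b \<le> F c d + F \<bar>c - a\<bar> \<bar>d - b\<bar>"
proof -
  have "metric_on (UNIV \<times> UNIV) (\<lambda>(x, y) (x', y'). F \<bar>x - x'\<bar> \<bar>y - y'\<bar>)"
    using metric_preserving_metric_on_Times[OF assms(1) metric_on_abs_diff metric_on_abs_diff] .
  from metric_on_triangle[OF this, of "(0, 0)" "(c, d)" "(a, b)"]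
  show ?thesis using assms by simp
qed

lemma metric_preserving_le_diag:
  assumes "metric_preserving F" "0 \<le> h" "h \<le> \<delta>" "0 \<le> k" "k \<le> \<delta>"
  shows "F h k \<le> 2 * F \<delta> \<delta>"
proof (cases "\<delta> = 0")
  case True
  then show ?thesis using assms metric_preserving_zero[OF assms(1)] by simp
next
  case False
  then have "\<delta> > 0" using assms by simp
  have "metric_on (UNIV \<times> UNIV) (\<lambda>(x, y) (x', y'). F (min \<bar>x - x'\<bar> \<delta>) (min \<bar>y - y'\<bar> \<delta>))"
    using metric_preserving_metric_on_Times[OF assms(1)] metric_on_min_abs_diff[OF \<open>\<delta> > 0\<close>]
    by blast
  from metric_on_triangle[OF this, of "(0, 0)" "(2 * \<delta>, 2 * \<delta>)" "(h, k)"]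
  have "F (min \<bar>0 - h\<bar> \<delta>) (min \<bar>0 - k\<bar> \<delta>) \<le> F (min \<bar>0 - 2 * \<delta>\<bar> \<delta>) (min \<bar>0 - 2 * \<delta>\<bar> \<delta>)
      + F (min \<bar>2 * \<delta> - h\<bar> \<delta>) (min \<bar>2 * \<delta> - k\<bar> \<delta>)"
    by simp
  moreover have "min \<bar>0 - h\<bar> \<delta> = h" "min \<bar>0 - k\<bar> \<delta> = k" "min \<bar>0 - 2 * \<delta>\<bar> \<delta> = \<delta>"
    "min \<bar>2 * \<delta> - h\<bar> \<delta> = \<delta>" "min \<bar>2 * \<delta> - k\<bar> \<delta> = \<delta>"
    using assms by auto
  ultimately show ?thesis by simp
qed

lemma metric_preserving_oscillation:
  assumes "metric_preserving G" "0 \<le> a" "0 \<le> b" "0 \<le> c" "0 \<le> d"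
    and "\<bar>a - c\<bar> \<le> \<delta>" "\<bar>b - d\<bar> \<le> \<delta>"
  shows "\<bar>G a b - G c d\<bar> \<le> 2 * G \<delta> \<delta>"
proof -
  have "G a b \<le> G c d + G \<bar>c - a\<bar> \<bar>d - b\<bar>" "G c d \<le> G a b + G \<bar>a - c\<bar> \<bar>b - d\<bar>"
    using metric_preserving_triangle[OF assms(1)] assms(2-5) by auto
  moreover have "G \<bar>c - a\<bar> \<bar>d - b\<bar> \<le> 2 * G \<delta> \<delta>" "G \<bar>a - c\<bar> \<bar>b - d\<bar> \<le> 2 * G \<delta> \<delta>"
    using metric_preserving_le_diag[OF assms(1), of "\<bar>c - a\<bar>" \<delta> "\<bar>d - b\<bar>"]
      metric_preserving_le_diag[OF assms(1), of "\<bar>a - c\<bar>" \<delta> "\<bar>b - d\<bar>"] assms(6,7)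
    by (auto simp only: abs_ge_zero abs_minus_commute[of c a] abs_minus_commute[of d b])
  ultimately show ?thesis by linarith
qed

lemma metric_preserving_diag_small:
  assumes "metric_preserving F" "continuous_on ({0..} \<times> {0..}) (\<lambda>p. F (fst p) (snd p))"
    and "\<epsilon> > 0"
  obtains \<delta> where "\<delta> > 0" "F \<delta> \<delta> < \<epsilon>"
proof -
  have "continuous_on {0..} (\<lambda>t::real. F t t)"
    by (rule continuous_on_compose2[OF assms(2), of _ "\<lambda>t. (t, t)", simplified])
      (auto intro: continuous_intros)
  then have "((\<lambda>t. F t t) \<longlongrightarrow> F 0 0) (at 0 within {0..})"
    by (simp add: continuous_on_def)
  then have "((\<lambda>t. F t t) \<longlongrightarrow> 0) (at_right 0)"
    using metric_preserving_zero[OF assms(1)] by (auto intro: tendsto_within_subset)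
  then have "\<forall>\<^sub>F t in at_right 0. F t t < \<epsilon>"
    using assms(3) by (rule order_tendstoD)
  then obtain b :: real where "b > 0" "\<And>t. 0 < t \<Longrightarrow> t < b \<Longrightarrow> F t t < \<epsilon>"
    unfolding eventually_at_right_field by auto
  then show ?thesis using that[of "b / 2"] by simp
qed

lemma metric_preserving_approx_near:
  assumes "metric_preserving G" "metric_preserving F"
    and "0 \<le> a" "0 \<le> b" "0 \<le> c" "0 \<le> d" "\<bar>a - c\<bar> \<le> \<delta>" "\<bar>b - d\<bar> \<le> \<delta>"
    and "\<bar>G c d - F c d\<bar> < \<epsilon>" "G \<delta> \<delta> < \<epsilon>" "F \<delta> \<delta> < \<epsilon>"
  shows "\<bar>G a b - F a b\<bar> < 5 * \<epsilon>"
  using metric_preserving_oscillation[OF assms(1,3-8)] metric_preserving_oscillation[OF assms(2,3-8)]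
    assms(9-11) by linarith

lemma metric_preserving_approx_on_net:
  assumes "metric_preserving G" "metric_preserving F" "K \<subseteq> {0..} \<times> {0..}"
    and "C \<subseteq> K" "K \<subseteq> (\<Union>c\<in>C. ball c \<delta>)"
    and "\<forall>c\<in>C. \<bar>G (fst c) (snd c) - F (fst c) (snd c)\<bar> < \<epsilon>" "G \<delta> \<delta> < \<epsilon>" "F \<delta> \<delta> < \<epsilon>"
    and "p \<in> K"
  shows "\<bar>G (fst p) (snd p) - F (fst p) (snd p)\<bar> < 5 * \<epsilon>"
proof -
  obtain c where c: "c \<in> C" "dist c p < \<delta>" using assms(5,9) by auto
  then have "\<bar>fst p - fst c\<bar> \<le> \<delta>" "\<bar>snd p - snd c\<bar> \<le> \<delta>"
    using dist_fst_le[of c p] dist_snd_le[of c p] by (auto simp: dist_real_def)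
  moreover have "fst p \<ge> 0" "snd p \<ge> 0" "fst c \<ge> 0" "snd c \<ge> 0"
    using assms(3,4,9) c(1) by auto
  ultimately show ?thesis
    using metric_preserving_approx_near[OF assms(1,2)] assms(6-8) c(1) by blast
qed

theorem mainTheorem16:
  fixes Fs :: "nat \<Rightarrow> real \<Rightarrow> real \<Rightarrow> real" and F :: "real \<Rightarrow> real \<Rightarrow> real"
  assumes "\<And>n. n \<ge> 1 \<Longrightarrow> metric_preserving (Fs n)"
    and "metric_preserving F"
    and "continuous_on ({0..} \<times> {0..}) (\<lambda>p. F (fst p) (snd p))"
    and "\<And>a b. a \<ge> 0 \<Longrightarrow> b \<ge> 0 \<Longrightarrow> (\<lambda>n. Fs n a b) \<longlonglongrightarrow> F a b"
  shows "\<forall>K. compact K \<and> K \<subseteq> {0..} \<times> {0..} \<longrightarrow>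
           uniform_limit K (\<lambda>n p. Fs n (fst p) (snd p)) (\<lambda>p. F (fst p) (snd p)) sequentially"
proof (intro allI impI)
  fix K :: "(real \<times> real) set"
  assume K: "compact K \<and> K \<subseteq> {0..} \<times> {0..}"
  show "uniform_limit K (\<lambda>n p. Fs n (fst p) (snd p)) (\<lambda>p. F (fst p) (snd p)) sequentially"
    unfolding uniform_limit_iff dist_real_def
  proof (intro allI impI)
    fix e :: real
    assume "e > 0"
    then obtain \<delta> where "\<delta> > 0" and F\<delta>: "F \<delta> \<delta> < e / 5"
      using metric_preserving_diag_small[OF assms(2,3), of "e / 5"] by auto
    obtain C where C: "finite C" "C \<subseteq> K" "K \<subseteq> (\<Union>c\<in>C. ball c \<delta>)"
      using compact_imp_seq_compact[of K] K seq_compact_imp_totally_bounded \<open>\<delta> > 0\<close> by metis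
    have "\<forall>c\<in>C. \<forall>\<^sub>F n in sequentially. \<bar>Fs n (fst c) (snd c) - F (fst c) (snd c)\<bar> < e / 5"
      using C(2) K tendstoD[OF assms(4), of _ _ "e / 5"] \<open>e > 0\<close> by (force simp: dist_real_def)
    then have "\<forall>\<^sub>F n in sequentially. \<forall>c\<in>C. \<bar>Fs n (fst c) (snd c) - F (fst c) (snd c)\<bar> < e / 5"
      using C(1) by (rule eventually_ball_finite[rotated])
    moreover have "\<forall>\<^sub>F n in sequentially. Fs n \<delta> \<delta> < e / 5"
      using order_tendstoD(2)[OF assms(4) F\<delta>] \<open>\<delta> > 0\<close> by simp
    moreover have "\<forall>\<^sub>F n in sequentially. n \<ge> 1" by (rule eventually_ge_at_top)
    ultimately show "\<forall>\<^sub>F n in sequentially. \<forall>p\<in>K. \<bar>Fs n (fst p) (snd p) - F (fst p) (snd p)\<bar> < e"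
    proof eventually_elim
      case (elim n)
      then show ?case
        using metric_preserving_approx_on_net[OF assms(1) assms(2) _ C(2,3)] K F\<delta> by fastforce
    qed
  qed
qed

end
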